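(* Let $G$ be a graph, $\theta$ a real number, and $u,v$ two distinct $\theta$-positive vertices of $G$. Then $\mathrm{mult}(\theta,G\setminus\{u,v\})\le\mathrm{mult}(\theta,G)$ if and only if there exists a path $P$ in $G$ from $u$ to $v$ such that $\mathrm{mult}(\theta,G\setminus P)\le\mathrm{mult}(\theta,G)$.
   Context: All graphs are finite and simple. For a graph $G$ on $n$ vertices, let $p(G,r)$ be the number of $r$-matchings of $G$ ($p(G,0)=1$); the matching polynomial is $\mu(G,x)=\sum_{r=0}^{\lfloor n/2\rfloor}(-1)^r p(G,r)x^{n-2r}$ (the graph with no vertices has $\mu=1$). For real $\theta$, $\mathrm{mult}(\theta,G)$ is the multiplicity of $\theta$ as a root of $\mu(G,x)$ (it is $0$ if $\theta$ is not a root). $G\setminus X$ denotes deletion of the vertex set $X$ and its incident edges; for a path $P$, $G\setminus P$ is $G$ with all vertices of $P$ deleted. A vertex $u$ is $\theta$-positive in $G$ if $\mathrm{mult}(\theta,G\setminus\{u\})=\mathrm{mult}(\theta,G)+1$. *)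

theory Defs
  imports "HOL-Computational_Algebra.Polynomial"
begin

type_synonym 'a graph = "'a set \<times> 'a set set"

definition verts :: "'a graph \<Rightarrow> 'a set" where "verts G = fst G"
definition edges :: "'a graph \<Rightarrow> 'a set set" where "edges G = snd G"

definition graph :: "'a graph \<Rightarrow> bool" where
  "graph G \<longleftrightarrow> finite (verts G) \<and>
     (\<forall>e\<in>edges G. e \<subseteq> verts G \<and> card e = 2)"

definition del_verts :: "'a graph \<Rightarrow> 'a set \<Rightarrow> 'a graph" where
  "del_verts G X = (verts G - X, {e \<in> edges G. e \<inter> X = {}})"

definition matchings :: "'a graph \<Rightarrow> nat \<Rightarrow> 'a set set set" where
  "matchings G r = {M. M \<subseteq> edges G \<and> card M = r \<and>
      (\<forall>e\<in>M. \<forall>f\<in>M. e \<noteq> f \<longrightarrow> e \<inter> f = {})}"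

definition num_matchings :: "'a graph \<Rightarrow> nat \<Rightarrow> nat" where
  "num_matchings G r = card (matchings G r)"

definition match_poly :: "'a graph \<Rightarrow> real poly" where
  "match_poly G = (\<Sum>r\<le>card (verts G) div 2.
      monom ((-1) ^ r * real (num_matchings G r)) (card (verts G) - 2 * r))"

definition mult :: "real \<Rightarrow> 'a graph \<Rightarrow> nat" where
  "mult \<theta> G = order \<theta> (match_poly G)"

definition theta_positive :: "real \<Rightarrow> 'a graph \<Rightarrow> 'a \<Rightarrow> bool" where
  "theta_positive \<theta> G u \<longleftrightarrow> u \<in> verts G \<and> mult \<theta> (del_verts G {u}) = mult \<theta> G + 1"

definition is_path :: "'a graph \<Rightarrow> 'a list \<Rightarrow> 'a \<Rightarrow> 'a \<Rightarrow> bool" where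
  "is_path G P u v \<longleftrightarrow> P \<noteq> [] \<and> distinct P \<and> set P \<subseteq> verts G \<and>
     hd P = u \<and> last P = v \<and>
     (\<forall>i. Suc i < length P \<longrightarrow> {P ! i, P ! Suc i} \<in> edges G)"

end

theory Submission
  imports Defs
begin

(* The proof rests on the Heilmann-Lieb path identity
     mu(G-u) mu(G-v) - mu(G) mu(G-u-v) = sum over u-v paths P of mu(G-P)^2,
   proved by induction on the number of vertices from the vertex recurrence
     mu(G) = x mu(G-u) - sum over neighbours w of u of mu(G-u-w)
   and the decomposition of u-v paths according to their second vertex.
   Over the reals, (x - t)^(2k+1) divides a sum of squares iff (x - t)^(k+1)
   divides every summand.  Put m = mult(theta,G).  If u and v are
   theta-positive, (x - theta)^(2m+2) divides mu(G-u) mu(G-v), so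
   (x - theta)^(2m+1) divides mu(G) mu(G-u-v), i.e. mult(theta,G-u-v) > m,
   iff it divides the sum of squares, i.e. mult(theta,G-P) > m for every path P.
   The theorem is the contrapositive of this equivalence. *)

lemma verts_del_verts [simp]: "verts (del_verts G X) = verts G - X"
  by (simp add: del_verts_def verts_def)

lemma edges_del_verts [simp]: "edges (del_verts G X) = {e \<in> edges G. e \<inter> X = {}}"
  by (simp add: del_verts_def edges_def)

lemma del_verts_del_verts [simp]: "del_verts (del_verts G A) B = del_verts G (A \<union> B)"
  by (auto simp: del_verts_def verts_def edges_def)

lemma graph_del_verts: "graph G \<Longrightarrow> graph (del_verts G X)"
  by (auto simp: graph_def)

lemma finite_edges: "graph G \<Longrightarrow> finite (edges G)"
  by (rule finite_subset[of _ "Pow (verts G)"]) (auto simp: graph_def)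

definition nbrs :: "'a graph \<Rightarrow> 'a \<Rightarrow> 'a set" where
  "nbrs G u = {w. {u, w} \<in> edges G}"

lemma nbrs_edge:
  assumes "graph G" and "w \<in> nbrs G u"
  shows "w \<noteq> u" and "u \<in> verts G" and "w \<in> verts G"
proof -
  have "{u, w} \<in> edges G" using assms(2) by (simp add: nbrs_def)
  then have "card {u, w} = 2" and "{u, w} \<subseteq> verts G" using assms(1) by (auto simp: graph_def)
  then show "w \<noteq> u" and "u \<in> verts G" and "w \<in> verts G" by auto
qed

lemma finite_nbrs:
  assumes G: "graph G"
  shows "finite (nbrs G u)"
  by (rule finite_subset[of _ "verts G"]) (use G nbrs_edge[OF G] in \<open>auto simp: graph_def\<close>)

section \<open>The matching polynomial as a sum over matchings\<close>

definition all_matchings :: "'a graph \<Rightarrow> 'a set set set" where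
  "all_matchings G = {M. M \<subseteq> edges G \<and> (\<forall>e\<in>M. \<forall>f\<in>M. e \<noteq> f \<longrightarrow> e \<inter> f = {})}"

lemma finite_all_matchings: "graph G \<Longrightarrow> finite (all_matchings G)"
  by (rule finite_subset[of _ "Pow (edges G)"]) (auto simp: all_matchings_def finite_edges)

lemma finite_matching: "graph G \<Longrightarrow> M \<in> all_matchings G \<Longrightarrow> finite M"
  by (auto simp: all_matchings_def intro: finite_subset finite_edges)

text \<open>A matching covers twice as many vertices as it has edges.\<close>
lemma matching_size:
  assumes G: "graph G" and M: "M \<in> all_matchings G"
  shows "2 * card M \<le> card (verts G)"
proof -
  have two: "card e = 2" if "e \<in> M" for e
    using that M G by (auto simp: all_matchings_def graph_def)
  have "card (\<Union>M) = (\<Sum>e\<in>M. card e)"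
    using M finite_matching[OF G M] two
    by (intro card_Union_disjoint) (auto simp: all_matchings_def pairwise_def disjnt_def
        intro: card_ge_0_finite)
  also have "\<dots> = 2 * card M" using two by simp
  finally have "card (\<Union>M) = 2 * card M" .
  moreover have "\<Union>M \<subseteq> verts G" using M G by (auto simp: all_matchings_def graph_def)
  ultimately show ?thesis using G by (metis card_mono graph_def)
qed

definition matching_term :: "nat \<Rightarrow> 'a set set \<Rightarrow> real poly" where
  "matching_term n M = monom ((-1) ^ card M) (n - 2 * card M)"

lemma match_poly_as_sum:
  assumes G: "graph G"
  shows "match_poly G = (\<Sum>M\<in>all_matchings G. matching_term (card (verts G)) M)"
proof -
  let ?n = "card (verts G)"
  have "(\<Sum>M\<in>all_matchings G. matching_term ?n M)
      = (\<Sum>r\<le>?n div 2. \<Sum>M\<in>{M \<in> all_matchings G. card M = r}. matching_term ?n M)"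
    using matching_size[OF G] by (intro sum.group[symmetric] finite_all_matchings G) fastforce+
  also have "\<dots> = match_poly G"
    unfolding match_poly_def
  proof (intro sum.cong refl)
    fix r
    have "{M \<in> all_matchings G. card M = r} = matchings G r"
      by (auto simp: all_matchings_def matchings_def)
    then have "(\<Sum>M\<in>{M \<in> all_matchings G. card M = r}. matching_term ?n M)
        = (\<Sum>M\<in>matchings G r. monom ((-1) ^ r) (?n - 2 * r))"
      by (auto simp: matchings_def matching_term_def intro: sum.cong)
    also have "\<dots> = monom ((-1) ^ r * real (num_matchings G r)) (?n - 2 * r)"
      by (simp add: num_matchings_def of_nat_monom mult_monom mult.commute)
    finally show "(\<Sum>M\<in>{M \<in> all_matchings G. card M = r}. matching_term ?n M)
        = monom ((-1) ^ r * real (num_matchings G r)) (?n - 2 * r)" .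
  qed
  finally show ?thesis by simp
qed

text \<open>The coefficient of \<open>x\<^sup>|\<^sup>V\<^sup>|\<close> in the matching polynomial is 1 (only the empty
  matching contributes to it), so the matching polynomial is never zero.\<close>
lemma match_poly_nonzero:
  assumes G: "graph G"
  shows "match_poly G \<noteq> 0"
proof -
  let ?n = "card (verts G)"
  have "matchings G 0 = {{}}"
  proof (intro equalityI subsetI)
    fix M assume "M \<in> matchings G 0"
    then have "M \<subseteq> edges G" and "card M = 0" by (simp_all add: matchings_def)
    then show "M \<in> {{}}" using finite_subset[OF _ finite_edges[OF G]] by simp
  qed (simp add: matchings_def)
  have "coeff (match_poly G) ?n
      = (\<Sum>r\<le>?n div 2. if r = 0 then (-1) ^ r * real (num_matchings G r) else 0)"
    unfolding match_poly_def coeff_sum coeff_monom by (rule sum.cong[OF refl], rule if_cong) auto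
  then have "coeff (match_poly G) ?n = 1"
    using \<open>matchings G 0 = {{}}\<close> by (simp add: num_matchings_def)
  then show ?thesis by auto
qed

lemma dvd_match_poly_iff:
  "graph G \<Longrightarrow> [:-\<theta>, 1:] ^ n dvd match_poly G \<longleftrightarrow> n \<le> mult \<theta> G"
  by (simp add: order_divides mult_def match_poly_nonzero)

section \<open>The vertex recurrence\<close>

lemma all_matchings_avoiding:
  "all_matchings (del_verts G {u}) = {M \<in> all_matchings G. \<forall>e\<in>M. u \<notin> e}"
  by (auto simp: all_matchings_def)

lemma all_matchings_covering:
  assumes G: "graph G"
  shows "{M \<in> all_matchings G. \<exists>e\<in>M. u \<in> e}
       = (\<Union>w\<in>nbrs G u. insert {u, w} ` all_matchings (del_verts G {u, w}))"
proof (intro equalityI subsetI)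
  fix M assume "M \<in> {M \<in> all_matchings G. \<exists>e\<in>M. u \<in> e}"
  then obtain e where M: "M \<in> all_matchings G" and e: "e \<in> M" "u \<in> e" by blast
  then have "e \<in> edges G" by (auto simp: all_matchings_def)
  then obtain w where ew: "e = {u, w}"
    using G e(2) by (auto simp: graph_def card_2_iff doubleton_eq_iff)
  have "w \<in> nbrs G u" using \<open>e \<in> edges G\<close> ew by (simp add: nbrs_def)
  moreover have "M - {e} \<in> all_matchings (del_verts G {u, w})"
  proof -
    have "\<forall>f\<in>M - {e}. f \<inter> e = {}" using M e(1) by (auto simp: all_matchings_def)
    then show ?thesis using M unfolding all_matchings_def ew by auto
  qed
  moreover have "M = insert {u, w} (M - {e})" using e(1) ew by auto
  ultimately show "M \<in> (\<Union>w\<in>nbrs G u. insert {u, w} ` all_matchings (del_verts G {u, w}))"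
    by blast
next
  fix M assume "M \<in> (\<Union>w\<in>nbrs G u. insert {u, w} ` all_matchings (del_verts G {u, w}))"
  then obtain w M' where w: "w \<in> nbrs G u" and M': "M' \<in> all_matchings (del_verts G {u, w})"
    and M: "M = insert {u, w} M'" by blast
  have "M' \<subseteq> edges G" and "\<forall>e\<in>M'. e \<inter> {u, w} = {} \<and> {u, w} \<inter> e = {}"
    and "\<forall>e\<in>M'. \<forall>f\<in>M'. e \<noteq> f \<longrightarrow> e \<inter> f = {}"
    using M' by (auto simp: all_matchings_def)
  then show "M \<in> {M \<in> all_matchings G. \<exists>e\<in>M. u \<in> e}"
    using w unfolding M all_matchings_def nbrs_def by auto
qed

lemma sum_matchings_avoiding:
  assumes G: "graph G" and u: "u \<in> verts G"
  shows "(\<Sum>M\<in>{M \<in> all_matchings G. \<forall>e\<in>M. u \<notin> e}. matching_term (card (verts G)) M)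
       = [:0, 1:] * match_poly (del_verts G {u})"
proof -
  let ?n = "card (verts G)"
  have Gu: "graph (del_verts G {u})" using G by (rule graph_del_verts)
  have card_Gu: "card (verts (del_verts G {u})) = ?n - 1" using G u by (simp add: graph_def)
  have "?n \<ge> 1" using G u by (auto simp: graph_def Suc_le_eq card_gt_0_iff)
  have "[:0, 1:] * matching_term (?n - 1) M = matching_term ?n M"
    if "M \<in> all_matchings (del_verts G {u})" for M
  proof -
    have "2 * card M \<le> ?n - 1" using matching_size[OF Gu that] card_Gu by simp
    then have "?n - 2 * card M = Suc (?n - 1 - 2 * card M)" using \<open>?n \<ge> 1\<close> by linarith
    then show ?thesis by (simp add: matching_term_def monom_Suc)
  qed
  then show ?thesis
    unfolding match_poly_as_sum[OF Gu] card_Gu sum_distrib_left all_matchings_avoiding by simp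
qed

lemma sum_matchings_covering:
  assumes G: "graph G"
  shows "(\<Sum>M\<in>{M \<in> all_matchings G. \<exists>e\<in>M. u \<in> e}. matching_term (card (verts G)) M)
       = - (\<Sum>w\<in>nbrs G u. match_poly (del_verts G {u, w}))"
proof -
  let ?n = "card (verts G)"
  let ?B = "\<lambda>w. insert {u, w} ` all_matchings (del_verts G {u, w})"
  have not_in: "{u, w} \<notin> M" if "M \<in> all_matchings (del_verts G {u, w})" for w M
    using that by (auto simp: all_matchings_def)
  have disjoint: "?B w1 \<inter> ?B w2 = {}" if "w1 \<noteq> w2" for w1 w2
  proof (rule ccontr)
    assume "?B w1 \<inter> ?B w2 \<noteq> {}"
    then obtain M1 M2 where M2: "M2 \<in> all_matchings (del_verts G {u, w2})"
      and eq: "insert {u, w1} M1 = insert {u, w2} M2" by blast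
    have "{u, w1} \<noteq> {u, w2}" using that by (auto simp: doubleton_eq_iff)
    then have "{u, w1} \<in> M2" using eq by blast
    then show False using M2 by (auto simp: all_matchings_def)
  qed
  have block: "sum (matching_term ?n) (?B w) = - match_poly (del_verts G {u, w})"
    if w: "w \<in> nbrs G u" for w
  proof -
    let ?H = "del_verts G {u, w}"
    have H: "graph ?H" using G by (rule graph_del_verts)
    have card_H: "card (verts G - {u, w}) = ?n - 2"
      using nbrs_edge[OF G w] G by (simp add: graph_def card_Diff_subset)
    have inj: "inj_on (insert {u, w}) (all_matchings ?H)"
    proof (rule inj_onI)
      fix M1 M2 assume "M1 \<in> all_matchings ?H" "M2 \<in> all_matchings ?H"
        and "insert {u, w} M1 = insert {u, w} M2"
      then show "M1 = M2" by (simp add: insert_ident not_in)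
    qed
    have "matching_term ?n (insert {u, w} M) = - matching_term (?n - 2) M"
      if "M \<in> all_matchings ?H" for M
      using not_in[OF that] finite_matching[OF H that]
      by (simp add: matching_term_def minus_monom)
    then have "sum (matching_term ?n) (?B w) = (\<Sum>M\<in>all_matchings ?H. - matching_term (?n - 2) M)"
      by (simp add: sum.reindex[OF inj])
    then show ?thesis by (simp add: match_poly_as_sum[OF H] card_H sum_negf)
  qed
  have "(\<Sum>M\<in>(\<Union>w\<in>nbrs G u. ?B w). matching_term ?n M) = (\<Sum>w\<in>nbrs G u. sum (matching_term ?n) (?B w))"
    using finite_nbrs[OF G] finite_all_matchings[OF graph_del_verts[OF G]] disjoint
    by (intro sum.UNION_disjoint) auto
  also have "\<dots> = - (\<Sum>w\<in>nbrs G u. match_poly (del_verts G {u, w}))"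
    using block by (simp add: sum_negf)
  finally show ?thesis unfolding all_matchings_covering[OF G] .
qed

lemma match_poly_vertex_recurrence:
  assumes G: "graph G" and u: "u \<in> verts G"
  shows "match_poly G = [:0, 1:] * match_poly (del_verts G {u})
           - (\<Sum>w\<in>nbrs G u. match_poly (del_verts G {u, w}))"
proof -
  let ?f = "matching_term (card (verts G))"
  let ?avoiding = "{M \<in> all_matchings G. \<forall>e\<in>M. u \<notin> e}"
  let ?covering = "{M \<in> all_matchings G. \<exists>e\<in>M. u \<in> e}"
  have "sum ?f ?avoiding + sum ?f ?covering = sum ?f (?avoiding \<union> ?covering)"
    using finite_all_matchings[OF G] by (intro sum.union_disjoint[symmetric]) auto
  also have "?avoiding \<union> ?covering = all_matchings G" by blast
  finally show ?thesis
    unfolding match_poly_as_sum[OF G]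
    by (simp add: sum_matchings_avoiding[OF G u] sum_matchings_covering[OF G])
qed

section \<open>Paths and their first step\<close>

definition paths :: "'a graph \<Rightarrow> 'a \<Rightarrow> 'a \<Rightarrow> 'a list set" where
  "paths G u v = {P. is_path G P u v}"

text \<open>Paths are distinct lists of vertices, so there are finitely many.\<close>
lemma finite_paths:
  assumes G: "graph G"
  shows "finite (paths G u v)"
proof (rule finite_subset)
  show "paths G u v \<subseteq> {xs. set xs \<subseteq> verts G \<and> length xs \<le> card (verts G)}"
    using G by (auto simp: paths_def is_path_def graph_def distinct_card[symmetric] intro: card_mono)
  show "finite {xs. set xs \<subseteq> verts G \<and> length xs \<le> card (verts G)}"
    using G by (intro finite_lists_length_le) (simp add: graph_def)
qed

lemma is_path_loop: "is_path G Q v v \<longleftrightarrow> Q = [v] \<and> v \<in> verts G"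
  by (cases Q rule: remdups_adj.cases) (auto simp: is_path_def)

lemma is_path_del_vertex:
  assumes "u \<notin> set Q"
  shows "is_path (del_verts G {u}) Q w v \<longleftrightarrow> is_path G Q w v"
proof -
  have "{Q ! i, Q ! Suc i} \<inter> {u} = {}" if "Suc i < length Q" for i
    using assms that nth_mem[of i Q] nth_mem[of "Suc i" Q] by auto
  then show ?thesis using assms unfolding is_path_def by auto
qed

lemma is_path_Cons:
  assumes "Q \<noteq> []"
  shows "is_path G (u # Q) u v \<longleftrightarrow>
    u \<notin> set Q \<and> u \<in> verts G \<and> {u, hd Q} \<in> edges G \<and> is_path G Q (hd Q) v"
proof -
  have steps: "(\<forall>i. Suc i < length (u # Q) \<longrightarrow> R ((u # Q) ! i) ((u # Q) ! Suc i)) \<longleftrightarrow>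
      R u (hd Q) \<and> (\<forall>i. Suc i < length Q \<longrightarrow> R (Q ! i) (Q ! Suc i))" for R
    using assms by (cases Q) (auto simp: less_Suc_eq_0_disj)
  show ?thesis
    using assms steps[of "\<lambda>x y. {x, y} \<in> edges G"] by (auto simp: is_path_def)
qed

lemma paths_first_step:
  assumes G: "graph G" and uv: "u \<noteq> v"
  shows "paths G u v = (\<Union>w\<in>nbrs G u. Cons u ` paths (del_verts G {u}) w v)"
proof (intro equalityI subsetI)
  fix P assume "P \<in> paths G u v"
  then have P: "is_path G P u v" by (simp add: paths_def)
  then obtain Q where PQ: "P = u # Q" unfolding is_path_def by (cases P) auto
  have "Q \<noteq> []" using P PQ uv by (auto simp: is_path_def)
  then have uQ: "u \<notin> set Q" and "{u, hd Q} \<in> edges G" and "is_path G Q (hd Q) v"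
    using P unfolding PQ by (simp_all add: is_path_Cons)
  then have "hd Q \<in> nbrs G u" and "Q \<in> paths (del_verts G {u}) (hd Q) v"
    by (simp_all add: nbrs_def paths_def is_path_del_vertex[OF uQ])
  then show "P \<in> (\<Union>w\<in>nbrs G u. Cons u ` paths (del_verts G {u}) w v)"
    unfolding PQ by blast
next
  fix P assume "P \<in> (\<Union>w\<in>nbrs G u. Cons u ` paths (del_verts G {u}) w v)"
  then obtain w Q where w: "w \<in> nbrs G u" and Q: "is_path (del_verts G {u}) Q w v"
    and PQ: "P = u # Q" by (auto simp: paths_def)
  have Qne: "Q \<noteq> []" and hd: "hd Q = w" and uQ: "u \<notin> set Q"
    using Q by (auto simp: is_path_def)
  have "is_path G Q w v" using Q by (simp add: is_path_del_vertex[OF uQ])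
  then show "P \<in> paths G u v"
    using w nbrs_edge(2)[OF G w] uQ hd unfolding PQ paths_def
    by (simp add: is_path_Cons[OF Qne] nbrs_def)
qed

lemma sum_paths_first_step:
  assumes G: "graph G" and uv: "u \<noteq> v"
  shows "(\<Sum>P\<in>paths G u v. h P)
       = (\<Sum>w\<in>nbrs G u. \<Sum>Q\<in>paths (del_verts G {u}) w v. h (u # Q))"
proof -
  let ?Q = "\<lambda>w. paths (del_verts G {u}) w v"
  have "hd Q = w" if "Q \<in> ?Q w" for Q w using that by (simp add: paths_def is_path_def)
  then have "Cons u ` ?Q w1 \<inter> Cons u ` ?Q w2 = {}" if "w1 \<noteq> w2" for w1 w2
    using that by blast
  then have "(\<Sum>P\<in>paths G u v. h P) = (\<Sum>w\<in>nbrs G u. sum h (Cons u ` ?Q w))"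
    unfolding paths_first_step[OF G uv]
    using finite_nbrs[OF G] finite_paths[OF graph_del_verts[OF G]]
    by (intro sum.UNION_disjoint) auto
  also have "\<dots> = (\<Sum>w\<in>nbrs G u. \<Sum>Q\<in>?Q w. h (u # Q))"
    by (simp add: sum.reindex)
  finally show ?thesis .
qed

section \<open>The Heilmann-Lieb path identity\<close>

text \<open>The ring identity behind the induction step: expanding \<open>\<mu>(G)\<close> and \<open>\<mu>(G - v)\<close> at \<open>u\<close>
  (with \<open>h = \<mu>(G - u)\<close>, \<open>b = \<mu>(G - u - v)\<close>, \<open>a w = \<mu>(G - u - w)\<close>, \<open>c w = \<mu>(G - u - v - w)\<close>)
  turns the cross difference into a sum over the neighbours \<open>w\<close> of \<open>u\<close>.\<close>
lemma cross_difference_expansion: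
  fixes x h b :: "'r::comm_ring_1" and a c :: "'n \<Rightarrow> 'r"
  assumes N: "finite N"
  shows "h * (x * b - (\<Sum>w\<in>N - {v}. c w)) - (x * h - (\<Sum>w\<in>N. a w)) * b
       = (\<Sum>w\<in>N. if w = v then a w * b else a w * b - h * c w)"
proof (cases "v \<in> N")
  case True
  then show ?thesis using sum.remove[OF N True, of "\<lambda>w. a w * b"]
    by (simp add: sum.delta_remove[OF N] sum_subtractf algebra_simps sum_distrib_left sum_distrib_right)
next
  case False
  then show ?thesis
    by (simp add: sum.delta_remove[OF N] sum_subtractf algebra_simps sum_distrib_left sum_distrib_right)
qed

text \<open>By induction on the number of vertices: both products are expanded at \<open>u\<close>, and the
  terms for a neighbour \<open>w\<close> of \<open>u\<close> are the identity for \<open>w, v\<close> in \<open>G - u\<close>.\<close>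
theorem path_identity:
  assumes "graph G" and "u \<in> verts G" and "v \<in> verts G" and "u \<noteq> v"
  shows "match_poly (del_verts G {u}) * match_poly (del_verts G {v})
          - match_poly G * match_poly (del_verts G {u, v})
        = (\<Sum>P\<in>paths G u v. match_poly (del_verts G (set P)) ^ 2)"
  using assms
proof (induction "card (verts G)" arbitrary: G u v rule: less_induct)
  case less
  note G = less.prems(1) and u = less.prems(2) and v = less.prems(3) and uv = less.prems(4)
  let ?m = match_poly
  define H where "H = del_verts G {u}"
  define N where "N = nbrs G u"
  define h where "h = ?m H"
  define b where "b = ?m (del_verts G {u, v})"
  define a where "a = (\<lambda>w. ?m (del_verts G {u, w}))"
  define c where "c = (\<lambda>w. ?m (del_verts G {u, v, w}))"
  define S where "S = (\<lambda>w. \<Sum>Q\<in>paths H w v. ?m (del_verts H (set Q)) ^ 2)"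
  have H: "graph H" unfolding H_def using G by (rule graph_del_verts)
  have fin_N: "finite N" unfolding N_def using G by (rule finite_nbrs)
  have rec_G: "?m G = [:0, 1:] * h - (\<Sum>w\<in>N. a w)"
    unfolding h_def H_def N_def a_def using G u by (rule match_poly_vertex_recurrence)
  have rec_Gv: "?m (del_verts G {v}) = [:0, 1:] * b - (\<Sum>w\<in>N - {v}. c w)"
  proof -
    have "nbrs (del_verts G {v}) u = N - {v}" using uv by (auto simp: nbrs_def N_def)
    then show ?thesis
      using match_poly_vertex_recurrence[OF graph_del_verts[OF G, of "{v}"], of u] u uv
      by (simp add: b_def c_def insert_commute)
  qed
  have IH: "a w * b - h * c w = S w" if w: "w \<in> N - {v}" for w
  proof -
    have w_vert: "w \<in> verts H" using nbrs_edge[OF G] w by (auto simp: N_def H_def)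
    have "card (verts G) > 0" using u G by (auto simp: graph_def card_gt_0_iff)
    then have smaller: "card (verts H) < card (verts G)" using u G by (simp add: H_def graph_def)
    have "?m (del_verts H {w}) * ?m (del_verts H {v}) - ?m H * ?m (del_verts H {w, v}) = S w"
      unfolding S_def using w_vert v uv w by (intro less.hyps[OF smaller H]) (auto simp: H_def)
    moreover have "del_verts H {w} = del_verts G {u, w}" and "del_verts H {v} = del_verts G {u, v}"
      and "del_verts H {w, v} = del_verts G {u, v, w}"
      by (auto simp: H_def insert_commute)
    ultimately show ?thesis by (simp add: a_def b_def c_def h_def)
  qed
  text \<open>The one-edge path \<open>[u,v]\<close>, if present, contributes \<open>\<mu>(G - u - v)\<^sup>2\<close>.\<close>
  have S_v: "S v = b ^ 2"
  proof -
    have "paths H v v = {[v]}" using v uv by (auto simp: paths_def is_path_loop H_def)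
    moreover have "del_verts H {v} = del_verts G {u, v}" by (simp add: H_def insert_commute)
    ultimately show ?thesis by (simp add: S_def b_def)
  qed
  have "?m (del_verts G {u}) * ?m (del_verts G {v}) - ?m G * b
      = (\<Sum>w\<in>N. if w = v then a w * b else a w * b - h * c w)"
    unfolding rec_G rec_Gv h_def[symmetric] H_def[symmetric]
    using fin_N by (rule cross_difference_expansion)
  also have "\<dots> = (\<Sum>w\<in>N. S w)"
    using IH S_v by (intro sum.cong) (auto simp: a_def b_def power2_eq_square)
  also have "\<dots> = (\<Sum>P\<in>paths G u v. ?m (del_verts G (set P)) ^ 2)"
    unfolding sum_paths_first_step[OF G uv] S_def N_def H_def by simp
  finally show ?case unfolding b_def .
qed

section \<open>Roots of sums of squares\<close>

lemma sum_squares_root: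
  fixes f :: "'i \<Rightarrow> 'b::linordered_idom poly"
  assumes "finite S" and "[:-t, 1:] dvd (\<Sum>i\<in>S. f i ^ 2)" and "i \<in> S"
  shows "[:-t, 1:] dvd f i"
proof -
  have "(\<Sum>i\<in>S. poly (f i) t ^ 2) = 0"
    using assms(2) by (simp add: poly_eq_0_iff_dvd[symmetric] poly_sum)
  then have "poly (f i) t ^ 2 = 0" using assms(1,3) by (simp add: sum_nonneg_eq_0_iff)
  then show ?thesis by (simp add: poly_eq_0_iff_dvd)
qed

lemma power_times_square: "((x::'b::comm_ring_1) ^ (k + 1) * g) ^ 2 = x ^ (2 * k + 2) * g ^ 2"
proof -
  have "(k + 1) * 2 = 2 * k + 2" by simp
  then show ?thesis by (simp only: power_mult_distrib power_mult[symmetric])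
qed

text \<open>Hence the multiplicity of a root of a sum of squares is twice the least
  multiplicity among the summands; in particular it is never odd.\<close>
lemma sum_squares_dvd_iff:
  fixes f :: "'i \<Rightarrow> 'b::linordered_idom poly"
  assumes S: "finite S"
  shows "[:-t, 1:] ^ (2 * k + 1) dvd (\<Sum>i\<in>S. f i ^ 2) \<longleftrightarrow> (\<forall>i\<in>S. [:-t, 1:] ^ (k + 1) dvd f i)"
proof -
  define X where "X = [:-t, 1:]"
  note root = sum_squares_root[OF S, of t, folded X_def]
  have "\<forall>i\<in>S. X ^ (k + 1) dvd f i" if "X ^ (2 * k + 1) dvd (\<Sum>i\<in>S. f i ^ 2)"
    using that
  proof (induction k arbitrary: f)
    case 0
    then show ?case using root[of f] by simp
  next
    case (Suc k)
    have "X ^ (2 * k + 1) dvd X ^ (2 * Suc k + 1)" by (rule le_imp_power_dvd) simp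
    then have "X ^ (2 * k + 1) dvd (\<Sum>i\<in>S. f i ^ 2)" using Suc.prems by (rule dvd_trans)
    then have "\<forall>i\<in>S. X ^ (k + 1) dvd f i" by (rule Suc.IH)
    then obtain g where g: "\<forall>i\<in>S. f i = X ^ (k + 1) * g i" unfolding dvd_def by metis
    have "f i ^ 2 = X ^ (2 * k + 2) * g i ^ 2" if "i \<in> S" for i
      unfolding g[rule_format, OF that] by (rule power_times_square)
    then have "(\<Sum>i\<in>S. f i ^ 2) = X ^ (2 * k + 2) * (\<Sum>i\<in>S. g i ^ 2)"
      by (simp add: sum_distrib_left)
    moreover have "X ^ (2 * Suc k + 1) = X ^ (2 * k + 2) * X" by (simp add: algebra_simps)
    moreover have "X \<noteq> 0" by (simp add: X_def)
    ultimately have "X dvd (\<Sum>i\<in>S. g i ^ 2)" using Suc.prems by simp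
    then have "\<forall>i\<in>S. X dvd g i" using root by blast
    then show ?case using g by (auto intro: mult_dvd_mono)
  qed
  moreover have "X ^ (2 * k + 1) dvd (\<Sum>i\<in>S. f i ^ 2)" if divides: "\<forall>i\<in>S. X ^ (k + 1) dvd f i"
  proof -
    have "X ^ (2 * k + 2) dvd f i ^ 2" if "i \<in> S" for i
    proof -
      have "X ^ (k + 1) dvd f i" using divides that by blast
      then obtain q where "f i = X ^ (k + 1) * q" by (rule dvdE)
      then show ?thesis by (simp only: power_times_square dvd_triv_left)
    qed
    then have "X ^ (2 * k + 2) dvd (\<Sum>i\<in>S. f i ^ 2)" by (intro dvd_sum) auto
    then show ?thesis by (rule dvd_trans[rotated]) (rule le_imp_power_dvd, simp)
  qed
  ultimately show ?thesis unfolding X_def by blast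
qed

text \<open>If \<open>u\<close> and \<open>v\<close> are \<open>\<theta>\<close>-positive, \<open>(x - \<theta>)\<^sup>2\<^sup>m\<^sup>+\<^sup>2\<close> divides \<open>\<mu>(G - u) \<mu>(G - v)\<close>,
  where \<open>m = mult(\<theta>, G)\<close>; we only need the odd exponent \<open>2m + 1\<close>.\<close>
lemma theta_positive_product_dvd:
  assumes G: "graph G" and "theta_positive \<theta> G u" and "theta_positive \<theta> G v"
  shows "[:-\<theta>, 1:] ^ (2 * mult \<theta> G + 1) dvd
           match_poly (del_verts G {u}) * match_poly (del_verts G {v})"
proof -
  let ?X = "[:-\<theta>, 1:]" and ?k = "mult \<theta> G + 1"
  have "mult \<theta> (del_verts G {u}) = ?k" and "mult \<theta> (del_verts G {v}) = ?k"
    using assms(2,3) by (simp_all add: theta_positive_def)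
  then have "?X ^ ?k dvd match_poly (del_verts G {u})" and "?X ^ ?k dvd match_poly (del_verts G {v})"
    by (simp_all only: dvd_match_poly_iff[OF graph_del_verts[OF G]] order_refl)
  then have "?X ^ ?k * ?X ^ ?k dvd match_poly (del_verts G {u}) * match_poly (del_verts G {v})"
    by (rule mult_dvd_mono)
  then show ?thesis
    by (rule dvd_trans[rotated]) (unfold power_add[symmetric], rule le_imp_power_dvd, simp)
qed

text \<open>Multiplicities add in products, so \<open>(x - \<theta>)\<^sup>m\<^sup>+\<^sup>n\<close> divides \<open>\<mu>(G) \<mu>(H)\<close> with
  \<open>m = mult(\<theta>, G)\<close> exactly when \<open>n \<le> mult(\<theta>, H)\<close>.\<close>
lemma dvd_match_poly_product_iff:
  assumes "graph G" and "graph H"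
  shows "[:-\<theta>, 1:] ^ (mult \<theta> G + n) dvd match_poly G * match_poly H \<longleftrightarrow> n \<le> mult \<theta> H"
proof -
  have "match_poly G * match_poly H \<noteq> 0"
    and "order \<theta> (match_poly G * match_poly H) = mult \<theta> G + mult \<theta> H"
    using assms by (simp_all add: order_mult mult_def match_poly_nonzero)
  then show ?thesis using order_divides[of \<theta> "mult \<theta> G + n"] by simp
qed

theorem lemma6p3:
  fixes G :: "'a graph" and \<theta> :: real and u v :: 'a
  assumes "graph G"
    and "u \<noteq> v"
    and "theta_positive \<theta> G u" and "theta_positive \<theta> G v"
  shows "mult \<theta> (del_verts G {u, v}) \<le> mult \<theta> G \<longleftrightarrow>
         (\<exists>P. is_path G P u v \<and> mult \<theta> (del_verts G (set P)) \<le> mult \<theta> G)"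
proof -
  note G = assms(1)
  let ?X = "[:-\<theta>, 1:]" and ?m = match_poly
  define m where "m = mult \<theta> G"
  define A where "A = ?m (del_verts G {u}) * ?m (del_verts G {v})"
  define B where "B = ?m G * ?m (del_verts G {u, v})"
  define D where "D = (\<Sum>P\<in>paths G u v. ?m (del_verts G (set P)) ^ 2)"
  have "u \<in> verts G" and "v \<in> verts G" using assms(3,4) by (simp_all add: theta_positive_def)
  then have "D = A - B"
    using path_identity[OF G _ _ assms(2)] by (simp add: A_def B_def D_def)
  moreover have "?X ^ (2 * m + 1) dvd A"
    unfolding A_def m_def using G assms(3,4) by (rule theta_positive_product_dvd)
  ultimately have "?X ^ (2 * m + 1) dvd D \<longleftrightarrow> ?X ^ (2 * m + 1) dvd B"
    by (simp add: dvd_diff_right_iff)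
  also have "\<dots> \<longleftrightarrow> m + 1 \<le> mult \<theta> (del_verts G {u, v})"
    unfolding B_def m_def mult_2 add.assoc
    by (rule dvd_match_poly_product_iff[OF G graph_del_verts[OF G]])
  finally have "m + 1 \<le> mult \<theta> (del_verts G {u, v}) \<longleftrightarrow>
      (\<forall>P\<in>paths G u v. m + 1 \<le> mult \<theta> (del_verts G (set P)))"
    unfolding D_def sum_squares_dvd_iff[OF finite_paths[OF G]]
      dvd_match_poly_iff[OF graph_del_verts[OF G]] by simp
  then show ?thesis by (auto simp: paths_def m_def not_less_eq_eq)
qed

end
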